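(* Let $p$ be an odd prime, $\sigma>0$ a real number, and $L\in\mathbb{F}_p^{d\times c}$ a matrix with pairwise distinct columns. Then there exists a $\sigma$-admissible matrix $S\in\mathbb{F}_p^{d\times c'}$ obtained from $L$ by deleting some columns (possibly the empty matrix, with $c'=0$) such that \[ c'\geq \frac{1}{\log_2 p}\left(\log_2 c-\sigma-(\sigma+d)\,H\!\left(\frac{\sigma}{\sigma+d}\right)\right)-1 . \]
   Context: For $x,\xi\in\mathbb{F}_p^{m}$, $\langle x,\xi\rangle$ denotes the integer representative in $(-p/2,p/2]$ of $\sum_t x_t\xi_t\in\mathbb{F}_p$. A matrix $S\in\mathbb{F}_p^{d\times m}$ with rows $r_1,\dots,r_d$ is called $\sigma$-admissible if $\sum_{i=1}^d\langle r_i,\xi\rangle^2>\sigma$ for every nonzero $\xi\in\mathbb{F}_p^m$. $H(q)=-q\log_2 q-(1-q)\log_2(1-q)$ is the binary entropy function. *)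

theory Defs
  imports Complex_Main "HOL-Computational_Algebra.Primes"
begin

text \<open>Elements of F_p are represented by integers in {0..<p}; a d x c matrix over F_p
  by a function M :: nat => nat => int (row index i < d, column index t), with
  entries in {0..<p}. A column-submatrix is given by the set J of kept column indices.\<close>

definition centered_rep :: "int \<Rightarrow> int \<Rightarrow> int" where
  "centered_rep p x = (let r = x mod p in if 2 * r \<le> p then r else r - p)"

definition sigma_admissible :: "int \<Rightarrow> real \<Rightarrow> nat \<Rightarrow> nat set \<Rightarrow> (nat \<Rightarrow> nat \<Rightarrow> int) \<Rightarrow> bool" where
  "sigma_admissible p \<sigma> d J M \<longleftrightarrow>
     (\<forall>\<xi> :: nat \<Rightarrow> int. (\<forall>t\<in>J. \<xi> t \<in> {0..<p}) \<and> (\<exists>t\<in>J. \<xi> t \<noteq> 0) \<longrightarrow>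
        (\<Sum>i<d. real_of_int (centered_rep p (\<Sum>t\<in>J. M i t * \<xi> t)) ^ 2) > \<sigma>)"

definition bin_entropy :: "real \<Rightarrow> real" where
  "bin_entropy q = - q * log 2 q - (1 - q) * log 2 (1 - q)"

end

theory Submission imports Defs "HOL-Library.FuncSet" begin

text \<open>Take an inclusion-maximal admissible set J of columns. For every other column t, adding t
  destroys admissibility, which is witnessed by some xi_t with xi_t(t) \<noteq> 0 (J itself is admissible)
  whose centered image w_t has squared norm at most \<sigma>. As p is prime and the columns of L are
  distinct, t is determined by the triple (xi_t(t), w_t, xi_t restricted to J), so
  c \<le> |J| + (p - 1) N p^|J| \<le> N p^(|J| + 1), where N counts the integer vectors of squared norm
  at most \<sigma>. Since |w_i| \<le> w_i^2, Rankin's trick with weight x^(\<Sum>|w_i| - \<sigma>) and x = q/2,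
  q = \<sigma>/(\<sigma>+d), bounds log_2 N by \<sigma> + (\<sigma>+d) H(q).\<close>

subsection \<open>Counting short integer vectors\<close>

lemma sum_power_abs_symmetric_interval:
  fixes x :: real assumes "x \<noteq> 1"
  shows "(\<Sum>k\<in>{-int m..int m}. x ^ nat \<bar>k\<bar>) = (1 + x - 2 * x ^ (m + 1)) / (1 - x)"
proof (induction m)
  case 0
  then show ?case using assms by (simp add: field_simps)
next
  case (Suc m)
  have split: "{-int (Suc m)..int (Suc m)} = insert (-(int m+1)) (insert (int m+1) {-int m..int m})"
    by auto
  have "(\<Sum>k\<in>{-int (Suc m)..int (Suc m)}. x ^ nat \<bar>k\<bar>)
      = x ^ (m+1) + (x ^ (m+1) + (\<Sum>k\<in>{-int m..int m}. x ^ nat \<bar>k\<bar>))"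
    unfolding split by (simp add: nat_add_distrib)
  also have "\<dots> = (1 + x - 2 * x ^ (Suc m + 1)) / (1 - x)"
    unfolding Suc.IH using assms by (simp add: field_simps)
  finally show ?case .
qed

lemma sum_power_abs_symmetric_interval_le:
  fixes x :: real assumes "0 \<le> x" "x < 1"
  shows "(\<Sum>k\<in>{-int m..int m}. x ^ nat \<bar>k\<bar>) \<le> (1 + x) / (1 - x)"
  using assms by (simp add: sum_power_abs_symmetric_interval divide_right_mono)

text \<open>Rankin's trick: every vector counted has weight x^(\<Sum>|w_i| - \<sigma>) \<ge> 1, and the total
  weight of the box factorises over the coordinates.\<close>
lemma card_l1_ball_le:
  fixes x \<sigma> :: real assumes "0 < x" "x < 1"
  shows "real (card {w \<in> PiE {..<d} (\<lambda>_. {-int m..int m}). real (\<Sum>i<d. nat \<bar>w i\<bar>) \<le> \<sigma>})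
          \<le> x powr (-\<sigma>) * ((1 + x) / (1 - x)) ^ d"
proof -
  define P where "P = PiE {..<d} (\<lambda>_. {-int m..int m})"
  define B where "B = {w \<in> P. real (\<Sum>i<d. nat \<bar>w i\<bar>) \<le> \<sigma>}"
  have "real (card B) = (\<Sum>w\<in>B. 1)" by simp
  also have "\<dots> \<le> (\<Sum>w\<in>B. x powr (-\<sigma>) * x ^ (\<Sum>i<d. nat \<bar>w i\<bar>))"
  proof (rule sum_mono)
    fix w assume "w \<in> B"
    then have le: "real (\<Sum>i<d. nat \<bar>w i\<bar>) - \<sigma> \<le> 0" unfolding B_def by auto
    have "x powr (-\<sigma>) * x ^ (\<Sum>i<d. nat \<bar>w i\<bar>) = x powr (real (\<Sum>i<d. nat \<bar>w i\<bar>) - \<sigma>)"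
      using assms by (simp add: powr_realpow[symmetric] powr_add[symmetric])
    also have "\<dots> \<ge> 1" using powr_mono'[OF le, of x] assms by simp
    finally show "1 \<le> x powr (-\<sigma>) * x ^ (\<Sum>i<d. nat \<bar>w i\<bar>)" .
  qed
  also have "\<dots> \<le> (\<Sum>w\<in>P. x powr (-\<sigma>) * x ^ (\<Sum>i<d. nat \<bar>w i\<bar>))"
    by (rule sum_mono2) (use assms in \<open>auto simp: P_def B_def finite_PiE\<close>)
  also have "\<dots> = x powr (-\<sigma>) * (\<Sum>w\<in>P. \<Prod>i<d. x ^ nat \<bar>w i\<bar>)"
    by (simp add: sum_distrib_left power_sum)
  also have "(\<Sum>w\<in>P. \<Prod>i<d. x ^ nat \<bar>w i\<bar>) = (\<Prod>i<d. \<Sum>k\<in>{-int m..int m}. x ^ nat \<bar>k\<bar>)"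
    unfolding P_def by (rule prod_sum_PiE[symmetric]) auto
  also have "\<dots> \<le> (\<Prod>i<d. (1 + x) / (1 - x))"
    by (rule prod_mono) (use assms sum_power_abs_symmetric_interval_le in \<open>auto intro: sum_nonneg\<close>)
  finally show ?thesis using assms unfolding B_def P_def by (simp add: mult_left_mono)
qed

definition short_vectors :: "int \<Rightarrow> real \<Rightarrow> nat \<Rightarrow> (nat \<Rightarrow> int) set" where
  "short_vectors m \<sigma> d = {w \<in> PiE {..<d} (\<lambda>_. {-m..m}). (\<Sum>i<d. real_of_int (w i) ^ 2) \<le> \<sigma>}"

lemma finite_short_vectors: "finite (short_vectors m \<sigma> d)"
  unfolding short_vectors_def by (rule finite_subset[of _ "PiE {..<d} (\<lambda>_. {-m..m})"]) (auto simp: finite_PiE)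

lemma card_short_vectors_ge_1:
  assumes "\<sigma> \<ge> 0" "m \<ge> 0"
  shows "card (short_vectors m \<sigma> d) \<ge> 1"
proof -
  have "(\<lambda>i\<in>{..<d}. 0) \<in> short_vectors m \<sigma> d" using assms unfolding short_vectors_def by auto
  then show ?thesis using finite_short_vectors by (metis One_nat_def Suc_leI card_gt_0_iff empty_iff)
qed

lemma abs_le_power2_int: "real (nat \<bar>z\<bar>) \<le> real_of_int z ^ 2"
proof -
  have "\<bar>z\<bar> \<le> z ^ 2"
  proof (cases "z = 0")
    case False
    then have "\<bar>z\<bar> * 1 \<le> \<bar>z\<bar> * \<bar>z\<bar>" by (intro mult_left_mono) auto
    then show ?thesis by (simp add: power2_eq_square abs_mult[symmetric])
  qed simp
  then show ?thesis by (smt (verit) of_int_le_iff of_int_power of_nat_nat)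
qed

lemma short_vectors_subset_l1_ball:
  assumes "m \<ge> 0"
  shows "short_vectors m \<sigma> d
    \<subseteq> {w \<in> PiE {..<d} (\<lambda>_. {-int (nat m)..int (nat m)}). real (\<Sum>i<d. nat \<bar>w i\<bar>) \<le> \<sigma>}"
proof
  fix w assume w: "w \<in> short_vectors m \<sigma> d"
  have "real (\<Sum>i<d. nat \<bar>w i\<bar>) = (\<Sum>i<d. real (nat \<bar>w i\<bar>))" by simp
  also have "\<dots> \<le> (\<Sum>i<d. real_of_int (w i) ^ 2)" by (intro sum_mono abs_le_power2_int)
  also have "\<dots> \<le> \<sigma>" using w unfolding short_vectors_def by auto
  finally show "w \<in> {w \<in> PiE {..<d} (\<lambda>_. {-int (nat m)..int (nat m)}). real (\<Sum>i<d. nat \<bar>w i\<bar>) \<le> \<sigma>}"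
    using w assms unfolding short_vectors_def by auto
qed

lemma scaled_bin_entropy:
  fixes \<sigma> \<delta> :: real assumes "\<sigma> + \<delta> \<noteq> 0"
  shows "(\<sigma> + \<delta>) * bin_entropy (\<sigma> / (\<sigma> + \<delta>))
    = - \<sigma> * log 2 (\<sigma> / (\<sigma> + \<delta>)) - \<delta> * log 2 (\<delta> / (\<sigma> + \<delta>))"
proof -
  define q where "q = \<sigma> / (\<sigma> + \<delta>)"
  have "(\<sigma> + \<delta>) * bin_entropy q = - ((\<sigma> + \<delta>) * q) * log 2 q - ((\<sigma> + \<delta>) * (1 - q)) * log 2 (1 - q)"
    unfolding bin_entropy_def by (simp add: algebra_simps)
  moreover have "(\<sigma> + \<delta>) * q = \<sigma>" "(\<sigma> + \<delta>) * (1 - q) = \<delta>" "1 - q = \<delta> / (\<sigma> + \<delta>)"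
    using assms unfolding q_def by (simp_all add: field_simps)
  ultimately show ?thesis unfolding q_def by metis
qed

lemma log_card_short_vectors_le:
  assumes "\<sigma> > 0" "m \<ge> 0"
  shows "log 2 (card (short_vectors m \<sigma> d)) \<le> \<sigma> + (\<sigma> + real d) * bin_entropy (\<sigma> / (\<sigma> + real d))"
proof -
  define q where "q = \<sigma> / (\<sigma> + real d)"
  define x where "x = q / 2"
  define r where "r = (1 + x) / (1 - x)"
  have q: "0 < q" "q \<le> 1" using assms unfolding q_def by auto
  then have x: "0 < x" "x < 1" and r: "r > 0" unfolding x_def r_def by auto
  have "card (short_vectors m \<sigma> d)
      \<le> card {w \<in> PiE {..<d} (\<lambda>_. {-int (nat m)..int (nat m)}). real (\<Sum>i<d. nat \<bar>w i\<bar>) \<le> \<sigma>}"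
    by (rule card_mono[OF _ short_vectors_subset_l1_ball[OF assms(2)]]) (simp add: finite_PiE)
  then have "real (card (short_vectors m \<sigma> d)) \<le> x powr (-\<sigma>) * r ^ d"
    using card_l1_ball_le[OF x] unfolding r_def by (meson of_nat_le_iff order_trans)
  then have "log 2 (card (short_vectors m \<sigma> d)) \<le> log 2 (x powr (-\<sigma>) * r ^ d)"
    using card_short_vectors_ge_1[of \<sigma> m d] assms by (subst log_le_cancel_iff) auto
  also have "\<dots> = \<sigma> - \<sigma> * log 2 q + real d * log 2 r"
    using x r q unfolding x_def by (simp add: log_mult log_powr log_nat_power log_divide algebra_simps)
  also have "real d * log 2 r \<le> - real d * log 2 (real d / (\<sigma> + real d))"
  proof (cases "d = 0")
    case False
    then have q1: "q < 1" and dq: "real d / (\<sigma> + real d) = 1 - q"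
      using assms unfolding q_def by (auto simp: field_simps)
    have "r \<le> 1 / (1 - q)" using q q1 x unfolding r_def x_def
      by (simp add: divide_simps) (simp add: algebra_simps power2_eq_square)
    then have "log 2 r \<le> log 2 (1 / (1 - q))" using r q1 by (subst log_le_cancel_iff) auto
    then have "log 2 r \<le> - log 2 (1 - q)" using q1 by (simp add: log_divide)
    then show ?thesis unfolding dq using mult_left_mono[of _ _ "real d"] by fastforce
  qed simp
  finally show ?thesis using scaled_bin_entropy[of \<sigma> "real d"] assms unfolding q_def by simp
qed

subsection \<open>Columns outside a maximal admissible set\<close>

lemma centered_rep_mod: "p > 0 \<Longrightarrow> centered_rep p x mod p = x mod p"
  unfolding centered_rep_def Let_def by (simp add: mod_diff_right_eq[symmetric])

lemma centered_rep_bounds: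
  assumes "p > 0" shows "centered_rep p x \<in> {-p..p}"
proof -
  have "0 \<le> x mod p" "x mod p < p" using assms by simp_all
  then show ?thesis unfolding centered_rep_def Let_def by auto
qed

lemma mult_cancel_mod_prime:
  fixes p a u v y :: int
  assumes "prime p" "a \<in> {1..<p}" "u \<in> {0..<p}" "v \<in> {0..<p}"
    and "(u * a + y) mod p = (v * a + y) mod p"
  shows "u = v"
proof -
  have "p dvd (u - v) * a" using assms(5) by (simp add: mod_eq_dvd_iff algebra_simps)
  moreover have "\<not> p dvd a" using assms(2) zdvd_not_zless by auto
  ultimately have "p dvd u - v" using assms(1) prime_dvd_mult_iff by blast
  then have "u mod p = v mod p" by (simp add: mod_eq_dvd_iff)
  then show ?thesis using assms(3,4) by simp
qed

lemma not_admissible_insert_witness: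
  assumes adm: "sigma_admissible p \<sigma> d J L" and not_adm: "\<not> sigma_admissible p \<sigma> d (insert t J) L"
    and "t \<notin> J" "finite J" "p > 0"
  obtains \<xi> where "\<xi> t \<in> {1..<p}" "\<forall>s\<in>J. \<xi> s \<in> {0..<p}"
    "(\<lambda>i\<in>{..<d}. centered_rep p (\<Sum>s\<in>insert t J. L i s * \<xi> s)) \<in> short_vectors p \<sigma> d"
proof -
  obtain \<xi> where range: "\<forall>s\<in>insert t J. \<xi> s \<in> {0..<p}" and nonzero: "\<exists>s\<in>insert t J. \<xi> s \<noteq> 0"
    and "\<not> (\<Sum>i<d. real_of_int (centered_rep p (\<Sum>s\<in>insert t J. L i s * \<xi> s)) ^ 2) > \<sigma>"
    using not_adm unfolding sigma_admissible_def by blast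
  then have short: "(\<Sum>i<d. real_of_int (centered_rep p (\<Sum>s\<in>insert t J. L i s * \<xi> s)) ^ 2) \<le> \<sigma>"
    by (simp only: not_less)
  have "\<xi> t \<noteq> 0"
  proof
    assume "\<xi> t = 0"
    then have sums_eq: "(\<Sum>s\<in>insert t J. L i s * \<xi> s) = (\<Sum>s\<in>J. L i s * \<xi> s)" for i
      using \<open>t \<notin> J\<close> \<open>finite J\<close> by simp
    have "\<exists>s\<in>J. \<xi> s \<noteq> 0" using nonzero \<open>\<xi> t = 0\<close> by auto
    then have "\<sigma> < (\<Sum>i<d. real_of_int (centered_rep p (\<Sum>s\<in>J. L i s * \<xi> s)) ^ 2)"
      using adm range unfolding sigma_admissible_def by blast
    then show False using short unfolding sums_eq by simp
  qed
  then have "\<xi> t \<in> {1..<p}" using range by auto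
  moreover have "\<forall>s\<in>J. \<xi> s \<in> {0..<p}" using range by simp
  moreover have "(\<lambda>i\<in>{..<d}. centered_rep p (\<Sum>s\<in>insert t J. L i s * \<xi> s)) \<in> short_vectors p \<sigma> d"
  proof -
    let ?w = "\<lambda>i\<in>{..<d}. centered_rep p (\<Sum>s\<in>insert t J. L i s * \<xi> s)"
    have "?w \<in> PiE {..<d} (\<lambda>_. {-p..p})" using centered_rep_bounds[OF \<open>p > 0\<close>] by simp
    moreover have "(\<Sum>i<d. real_of_int (?w i) ^ 2) \<le> \<sigma>"
      using short sum.cong[OF refl, of "{..<d}" "\<lambda>i. real_of_int (?w i) ^ 2"] by (simp only: restrict_apply')
    ultimately show ?thesis unfolding short_vectors_def by blast
  qed
  ultimately show ?thesis by (rule that)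
qed

lemma column_eq_of_centered_rep_eq:
  assumes "prime p" "t \<notin> J" "t' \<notin> J" "finite J"
    and "\<xi> t \<in> {1..<p}" "\<xi>' t' = \<xi> t" "\<forall>s\<in>J. \<xi>' s = \<xi> s"
    and "L i t \<in> {0..<p}" "L i t' \<in> {0..<p}"
    and "centered_rep p (\<Sum>s\<in>insert t J. L i s * \<xi> s) = centered_rep p (\<Sum>s\<in>insert t' J. L i s * \<xi>' s)"
  shows "L i t = L i t'"
proof -
  have "p > 0" using assms(1) prime_gt_0_int by blast
  have "(\<Sum>s\<in>insert t J. L i s * \<xi> s) mod p = (\<Sum>s\<in>insert t' J. L i s * \<xi>' s) mod p"
    using arg_cong[OF assms(10), of "\<lambda>x. x mod p"] by (simp only: centered_rep_mod[OF \<open>p > 0\<close>])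
  moreover have "(\<Sum>s\<in>insert t J. L i s * \<xi> s) = L i t * \<xi> t + (\<Sum>s\<in>J. L i s * \<xi> s)"
    using assms(2,4) by simp
  moreover have "(\<Sum>s\<in>insert t' J. L i s * \<xi>' s) = L i t' * \<xi> t + (\<Sum>s\<in>J. L i s * \<xi> s)"
    using assms(3,4,6,7) by simp
  ultimately show ?thesis using mult_cancel_mod_prime[OF assms(1,5,8,9)] by simp
qed

lemma card_le_of_maximal_admissible:
  assumes "prime p" "\<sigma> \<ge> 0"
    and entries: "\<forall>i<d. \<forall>t<c. L i t \<in> {0..<p}"
    and distinct: "\<forall>t<c. \<forall>t'<c. t \<noteq> t' \<longrightarrow> (\<exists>i<d. L i t \<noteq> L i t')"
    and J: "J \<subseteq> {..<c}" "sigma_admissible p \<sigma> d J L"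
    and maximal: "\<forall>t\<in>{..<c} - J. \<not> sigma_admissible p \<sigma> d (insert t J) L"
  shows "c \<le> card (short_vectors p \<sigma> d) * nat p ^ (card J + 1)"
proof -
  define R where "R = {..<c} - J"
  define W where "W = short_vectors p \<sigma> d"
  define centered_image where
    "centered_image t \<xi> = (\<lambda>i\<in>{..<d}. centered_rep p (\<Sum>s\<in>insert t J. L i s * \<xi> s))" for t \<xi>
  have "p \<ge> 2" using assms(1) prime_ge_2_int by blast
  then have "p > 0" by simp
  have "finite J" using J(1) finite_subset by blast
  have "\<exists>\<xi>. \<xi> t \<in> {1..<p} \<and> (\<forall>s\<in>J. \<xi> s \<in> {0..<p}) \<and> centered_image t \<xi> \<in> W" if "t \<in> R" for t
  proof -
    have "\<not> sigma_admissible p \<sigma> d (insert t J) L" "t \<notin> J" using that maximal unfolding R_def by auto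
    then obtain \<xi> where "\<xi> t \<in> {1..<p}" "\<forall>s\<in>J. \<xi> s \<in> {0..<p}" "centered_image t \<xi> \<in> W"
      unfolding W_def centered_image_def
      by (rule not_admissible_insert_witness[OF J(2) _ _ \<open>finite J\<close> \<open>p > 0\<close>])
    then show ?thesis by blast
  qed
  then obtain f where f: "\<And>t. t \<in> R \<Longrightarrow>
      f t t \<in> {1..<p} \<and> (\<forall>s\<in>J. f t s \<in> {0..<p}) \<and> centered_image t (f t) \<in> W"
    by metis
  define G where "G t = (f t t, centered_image t (f t), restrict (f t) J)" for t
  have "G ` R \<subseteq> {1..<p} \<times> W \<times> PiE J (\<lambda>_. {0..<p})"
  proof (rule image_subsetI)
    fix t assume "t \<in> R"
    then show "G t \<in> {1..<p} \<times> W \<times> PiE J (\<lambda>_. {0..<p})" using f[of t] unfolding G_def by simp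
  qed
  moreover have "inj_on G R"
  proof (rule inj_onI)
    fix t t' assume t: "t \<in> R" and t': "t' \<in> R" and "G t = G t'"
    then have same: "f t' t' = f t t" "restrict (f t') J = restrict (f t) J"
      "centered_image t (f t) = centered_image t' (f t')"
      unfolding G_def by simp_all
    have "L i t = L i t'" if "i < d" for i
    proof (rule column_eq_of_centered_rep_eq[where \<xi> = "f t" and \<xi>' = "f t'", OF assms(1) _ _ \<open>finite J\<close>])
      show "t \<notin> J" "t' \<notin> J" using t t' unfolding R_def by simp_all
      show "f t t \<in> {1..<p}" using f[OF t] by blast
      show "f t' t' = f t t" by (fact same(1))
      show "\<forall>s\<in>J. f t' s = f t s" using same(2) by (metis restrict_apply')
      show "L i t \<in> {0..<p}" "L i t' \<in> {0..<p}" using entries t t' that unfolding R_def by simp_all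
      show "centered_rep p (\<Sum>s\<in>insert t J. L i s * f t s) = centered_rep p (\<Sum>s\<in>insert t' J. L i s * f t' s)"
        using fun_cong[OF same(3), of i] that unfolding centered_image_def by simp
    qed
    then show "t = t'" using distinct t t' unfolding R_def by blast
  qed
  ultimately have "card R \<le> card ({1..<p} \<times> W \<times> PiE J (\<lambda>_. {0..<p}))"
    by (intro card_inj_on_le) (simp_all add: W_def finite_short_vectors finite_PiE \<open>finite J\<close>)
  also have "\<dots> = nat (p - 1) * card W * nat p ^ card J"
    using \<open>finite J\<close> by (simp add: card_cartesian_product card_PiE)
  finally have R_bound: "card R \<le> nat (p - 1) * card W * nat p ^ card J" .
  have "card J < 2 ^ card J" by (rule less_exp)
  also have "(2::nat) ^ card J \<le> nat p ^ card J" using \<open>p \<ge> 2\<close> by (intro power_mono) auto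
  also have "\<dots> \<le> card W * nat p ^ card J"
    using card_short_vectors_ge_1[OF assms(2) order.trans[OF _ \<open>p \<ge> 2\<close>], of d] unfolding W_def by simp
  finally have J_bound: "card J \<le> card W * nat p ^ card J" by simp
  have "c = card J + card R"
    using card_mono[OF finite_lessThan J(1)] J(1) \<open>finite J\<close> unfolding R_def by (simp add: card_Diff_subset)
  also have "\<dots> \<le> card W * nat p ^ card J + nat (p - 1) * card W * nat p ^ card J"
    using J_bound R_bound by (rule add_mono)
  also have "\<dots> = card W * nat p ^ (card J + 1)"
  proof -
    have "nat p = Suc (nat (p - 1))" using \<open>p \<ge> 2\<close> by simp
    then show ?thesis by (metis mult.commute mult.left_commute mult_Suc power_Suc Suc_eq_plus1 add.commute)
  qed
  finally show ?thesis unfolding W_def .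
qed

lemma le_exponent_of_le_mult_power:
  fixes N b B :: real
  assumes "real c \<le> N * b ^ (k + 1)" "1 \<le> N" "log 2 N \<le> B" "1 < b"
  shows "(log 2 (real c) - B) / log 2 b - 1 \<le> real k"
proof -
  have "log 2 (real c) \<le> log 2 N + real (k + 1) * log 2 b"
  proof (cases "c = 0")
    case True
    have "0 \<le> log 2 N + real (k + 1) * log 2 b" using assms(2,4) by simp
    then show ?thesis using True by (simp add: log_def)
  next
    case False
    then have "log 2 (real c) \<le> log 2 (N * b ^ (k + 1))"
      using assms(1,2,4) by (subst log_le_cancel_iff) auto
    then show ?thesis using assms(2,4) by (simp add: log_mult log_nat_power algebra_simps)
  qed
  then show ?thesis using assms(3,4) by (simp add: divide_le_eq algebra_simps)
qed

theorem lemma4p3: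
  fixes p :: int and \<sigma> :: real and d c :: nat and L :: "nat \<Rightarrow> nat \<Rightarrow> int"
  assumes "prime p" and "odd p" and "\<sigma> > 0"
    and "\<forall>i<d. \<forall>t<c. L i t \<in> {0..<p}"
    and "\<forall>t<c. \<forall>t'<c. t \<noteq> t' \<longrightarrow> (\<exists>i<d. L i t \<noteq> L i t')"
  shows "\<exists>J \<subseteq> {..<c}. sigma_admissible p \<sigma> d J L \<and>
           real (card J) \<ge> (log 2 (real c) - \<sigma> - (\<sigma> + real d) * bin_entropy (\<sigma> / (\<sigma> + real d)))
                             / log 2 (real_of_int p) - 1"
proof -
  have "p \<ge> 2" using assms(1) prime_ge_2_int by blast
  define Adm where "Adm = {J. J \<subseteq> {..<c} \<and> sigma_admissible p \<sigma> d J L}"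
  have "{} \<in> Adm" unfolding Adm_def sigma_admissible_def by auto
  moreover have "finite Adm" unfolding Adm_def by (rule finite_subset[of _ "Pow {..<c}"]) auto
  ultimately obtain J where "J \<in> Adm" and maximal: "\<forall>J'\<in>Adm. J \<subseteq> J' \<longrightarrow> J = J'"
    using finite_has_maximal by blast
  then have J: "J \<subseteq> {..<c}" "sigma_admissible p \<sigma> d J L" unfolding Adm_def by auto
  moreover have "\<forall>t\<in>{..<c} - J. \<not> sigma_admissible p \<sigma> d (insert t J) L"
    using maximal J(1) unfolding Adm_def by blast
  ultimately have "c \<le> card (short_vectors p \<sigma> d) * nat p ^ (card J + 1)"
    using card_le_of_maximal_admissible assms(1,3-5) by (metis less_imp_le)
  then have "real c \<le> real (card (short_vectors p \<sigma> d)) * real_of_int p ^ (card J + 1)"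
    using \<open>p \<ge> 2\<close> by (metis of_nat_le_iff of_nat_mult of_nat_power of_int_of_nat_eq nat_0_le zero_le_numeral order_trans)
  moreover have "1 \<le> real (card (short_vectors p \<sigma> d))"
    using card_short_vectors_ge_1[of \<sigma> p d] assms(3) \<open>p \<ge> 2\<close> by simp
  moreover have "1 < real_of_int p" using \<open>p \<ge> 2\<close> by simp
  moreover have "p \<ge> 0" using \<open>p \<ge> 2\<close> by simp
  ultimately have "(log 2 (real c) - (\<sigma> + (\<sigma> + real d) * bin_entropy (\<sigma> / (\<sigma> + real d))))
               / log 2 (real_of_int p) - 1 \<le> real (card J)"
    using le_exponent_of_le_mult_power log_card_short_vectors_le[OF assms(3)] by blast
  then show ?thesis using J by (auto simp: diff_diff_eq)
qed

end
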